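(* Let $\mathsf{v}_1,\mathsf{v}_2\in V$ be consistently oriented, ultraparallel spacelike vectors. Suppose $p_i=a_i\mathsf{v}_i^- - b_i\mathsf{v}_i^+$ with $a_i,b_i>0$ for $i=1,2$ (regarded as points of $E$ via a chosen origin). Then the crooked planes $\mathcal{C}(\mathsf{v}_1,p_1)$ and $\mathcal{C}(\mathsf{v}_2,p_2)$ are disjoint.
   Context: $V=\mathbb{R}^3$ with Lorentzian inner product $x\cdot y=x_1y_1+x_2y_2-x_3y_3$ and standard orientation; $E$ is the affine space with translation space $V$. Null: $x\cdot x=0$; spacelike: $x\cdot x>0$; future-pointing: third coordinate positive. The Lorentzian cross product $\boxtimes$ is the bilinear map with $u\cdot(v\boxtimes w)=\det[u\ v\ w]$. Spacelike $\mathsf{u},\mathsf{v}$ are ultraparallel if $\mathsf{u}\boxtimes\mathsf{v}$ is spacelike. For spacelike $\mathsf{v}$, $\mathsf{v}^-,\mathsf{v}^+$ are the two future-pointing null vectors of Euclidean length $1$ in $\mathsf{v}^\perp$, labelled so that $(\mathsf{v}^-,\mathsf{v}^+,\mathsf{v})$ is positively oriented. Spacelike $\mathsf{v}_1,\mathsf{v}_2$ are consistently oriented if $\mathsf{v}_1\cdot\mathsf{v}_2<0$ and $\mathsf{v}_i\cdot\mathsf{v}_j^{\pm}\le0$ for $i\ne j$. For null $x$, $\mathcal{P}(x)$ is the set of spacelike $w\in x^\perp$ with $w^+$ a positive multiple of $x$. The crooked plane $\mathcal{C}(\mathsf{v},p)=(p+\mathcal{P}(\mathsf{v}^+))\cup(p+\mathcal{P}(\mathsf{v}^-))\cup(p+\{x:\mathsf{v}\cdot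 x=0,\ x\cdot x\le0\})$. *)

theory Defs
  imports "HOL-Analysis.Analysis"
begin

text \<open>Minkowski space V = R^3 with x.y = x1 y1 + x2 y2 - x3 y3.
  The affine space E is identified with real^3 via a chosen origin.\<close>

definition ldot :: "real^3 \<Rightarrow> real^3 \<Rightarrow> real" where
  "ldot x y = x$1 * y$1 + x$2 * y$2 - x$3 * y$3"

definition null_vec :: "real^3 \<Rightarrow> bool" where
  "null_vec x \<longleftrightarrow> ldot x x = 0"

definition spacelike :: "real^3 \<Rightarrow> bool" where
  "spacelike x \<longleftrightarrow> ldot x x > 0"

definition future_pointing :: "real^3 \<Rightarrow> bool" where
  "future_pointing x \<longleftrightarrow> x$3 > 0"

definition det3 :: "real^3 \<Rightarrow> real^3 \<Rightarrow> real^3 \<Rightarrow> real" where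
  "det3 u v w = det (\<chi> i j. (if j = 1 then u else if j = 2 then v else w) $ i :: real^3^3)"

definition lcross :: "real^3 \<Rightarrow> real^3 \<Rightarrow> real^3" where
  "lcross v w = (THE z. \<forall>u. ldot u z = det3 u v w)"

definition ultraparallel :: "real^3 \<Rightarrow> real^3 \<Rightarrow> bool" where
  "ultraparallel u v \<longleftrightarrow> spacelike u \<and> spacelike v \<and> spacelike (lcross u v)"

definition unit_null_perp :: "real^3 \<Rightarrow> real^3 \<Rightarrow> bool" where
  "unit_null_perp v x \<longleftrightarrow> null_vec x \<and> future_pointing x \<and> norm x = 1 \<and> ldot v x = 0"

definition vplus :: "real^3 \<Rightarrow> real^3" where
  "vplus v = (THE x. unit_null_perp v x \<and> (\<exists>y. unit_null_perp v y \<and> det3 y x v > 0))"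

definition vminus :: "real^3 \<Rightarrow> real^3" where
  "vminus v = (THE y. unit_null_perp v y \<and> (\<exists>x. unit_null_perp v x \<and> det3 y x v > 0))"

definition consistently_oriented :: "real^3 \<Rightarrow> real^3 \<Rightarrow> bool" where
  "consistently_oriented v1 v2 \<longleftrightarrow> spacelike v1 \<and> spacelike v2 \<and> ldot v1 v2 < 0 \<and>
     ldot v1 (vminus v2) \<le> 0 \<and> ldot v1 (vplus v2) \<le> 0 \<and>
     ldot v2 (vminus v1) \<le> 0 \<and> ldot v2 (vplus v1) \<le> 0"

definition Pset :: "real^3 \<Rightarrow> (real^3) set" where
  "Pset x = {w. spacelike w \<and> ldot x w = 0 \<and> (\<exists>c>0. vplus w = c *\<^sub>R x)}"

definition crooked_plane :: "real^3 \<Rightarrow> real^3 \<Rightarrow> (real^3) set" where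
  "crooked_plane v p = ((\<lambda>x. p + x) ` Pset (vplus v)) \<union> ((\<lambda>x. p + x) ` Pset (vminus v)) \<union>
     ((\<lambda>x. p + x) ` {x. ldot v x = 0 \<and> ldot x x \<le> 0})"

end

theory Submission
  imports Defs
begin

text \<open>A crooked plane with vertex \<open>a v\<^sup>- - b v\<^sup>+\<close> (\<open>a, b > 0\<close>) lies in the region of points \<open>x\<close>
  with either \<open>x\<cdot>v \<ge> 0\<close> and \<open>x\<cdot>v\<^sup>+ < 0\<close>, or \<open>x\<cdot>v \<le> 0\<close> and \<open>x\<cdot>v\<^sup>- > 0\<close>: the two wings lie in
  \<open>v\<^sup>+\<^sup>\<perp>\<close> and \<open>v\<^sup>-\<^sup>\<perp>\<close> on the positive and negative side of \<open>v\<close>, and on the stem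
  \<open>x\<cdot>v\<^sup>-\<close> and \<open>x\<cdot>v\<^sup>+\<close> have the same sign. For consistently oriented ultraparallel
  \<open>v\<^sub>1, v\<^sub>2\<close> these regions are disjoint: in coordinates with respect to \<open>v\<^sub>1, v\<^sub>2, v\<^sub>1 \<boxtimes> v\<^sub>2\<close> the
  orientation conventions fix the \<open>v\<^sub>1 \<boxtimes> v\<^sub>2\<close>-components of \<open>v\<^sub>i\<^sup>\<plusminus>\<close>, and each of the four
  resulting pairs of linear inequalities, once the third coordinate is eliminated, contradicts
  \<open>v\<^sub>1\<cdot>v\<^sub>2 < 0\<close> and \<open>(v\<^sub>1\<cdot>v\<^sub>2)\<^sup>2 > (v\<^sub>1\<cdot>v\<^sub>1)(v\<^sub>2\<cdot>v\<^sub>2)\<close>.\<close>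

lemma det3_eq: "det3 u v w =
   u$1 * v$2 * w$3 + v$1 * w$2 * u$3 + w$1 * u$2 * v$3
 - u$1 * w$2 * v$3 - v$1 * u$2 * w$3 - w$1 * v$2 * u$3"
  unfolding det3_def det_3 by simp

lemma det3_mult_det3:
  "det3 a b c * det3 d e f = -( ldot a d * (ldot b e * ldot c f - ldot b f * ldot c e)
     - ldot a e * (ldot b d * ldot c f - ldot b f * ldot c d)
     + ldot a f * (ldot b d * ldot c e - ldot b e * ldot c d))"
  unfolding det3_eq ldot_def by algebra

lemma det3_swap: "det3 u v w = - det3 v u w"
  unfolding det3_eq by (simp add: algebra_simps)

lemma det3_scaleR_2: "det3 u (c *\<^sub>R v) w = c * det3 u v w"
  unfolding det3_eq by (simp add: algebra_simps)

lemma ldot_commute: "ldot x y = ldot y x"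
  unfolding ldot_def by (simp add: algebra_simps)

lemma ldot_add_left: "ldot (x + y) z = ldot x z + ldot y z"
  unfolding ldot_def by (simp add: algebra_simps)

lemma ldot_diff_left: "ldot (x - y) z = ldot x z - ldot y z"
  unfolding ldot_def by (simp add: algebra_simps)

lemma ldot_scaleR_left: "ldot (c *\<^sub>R x) z = c * ldot x z"
  unfolding ldot_def by (simp add: algebra_simps)

lemma ldot_uminus_right: "ldot x (- y) = - ldot x y"
  unfolding ldot_def by (simp add: algebra_simps)

lemma ldot_eqI:
  assumes "\<And>u. ldot u z = ldot u z'"
  shows "z = z'"
  using assms[of "axis 1 1"] assms[of "axis 2 1"] assms[of "axis 3 1"]
  unfolding ldot_def by (simp add: vec_eq_iff forall_3 axis_def)

lemma lcross_eq:
  "lcross v w = vector [v$2*w$3 - v$3*w$2, v$3*w$1 - v$1*w$3, v$2*w$1 - v$1*w$2]"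
  unfolding lcross_def
  by (rule the_equality) (auto simp: ldot_def det3_eq algebra_simps intro!: ldot_eqI)

lemma ldot_lcross: "ldot u (lcross v w) = det3 u v w"
  unfolding lcross_eq ldot_def det3_eq by (simp add: algebra_simps)

lemma ldot_lcross_left: "ldot v (lcross v w) = 0"
  unfolding ldot_lcross det3_eq by (simp add: algebra_simps)

lemma lcross_commute: "lcross w v = - lcross v w"
  by (rule ldot_eqI) (simp add: ldot_uminus_right ldot_lcross det3_eq algebra_simps)

lemma ldot_lcross_self: "ldot (lcross u v) (lcross u v) = (ldot u v)^2 - ldot u u * ldot v v"
  unfolding lcross_eq ldot_def by (simp add: power2_eq_square algebra_simps)

lemma norm_vec3: "norm (x::real^3) = sqrt (x$1^2 + x$2^2 + x$3^2)"
  unfolding norm_vec_def L2_set_def sum_3 by simp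

lemma unit_null_perp_iff_coords: "unit_null_perp v x \<longleftrightarrow>
   x$1^2 + x$2^2 = x$3^2 \<and> x$3 > 0 \<and> x$1^2 + x$2^2 + x$3^2 = 1 \<and> v$1*x$1 + v$2*x$2 - v$3*x$3 = 0"
  unfolding unit_null_perp_def null_vec_def future_pointing_def ldot_def norm_vec3
  by (auto simp: power2_eq_square algebra_simps)

text \<open>For \<open>e = \<plusminus>1\<close> these are the two unit null vectors in \<open>v\<^sup>\<perp>\<close>: nullity and unit
  Euclidean length force the third coordinate to be \<open>sqrt (1/2)\<close>, and the remaining
  two coordinates solve a linear and a quadratic equation.\<close>
definition null_perp_vec :: "real \<Rightarrow> real^3 \<Rightarrow> real^3" where
  "null_perp_vec e v = sqrt (1/2) *\<^sub>R vector
     [(v$1 * v$3 - e * v$2 * sqrt (ldot v v)) / (v$1^2 + v$2^2),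
      (v$2 * v$3 + e * v$1 * sqrt (ldot v v)) / (v$1^2 + v$2^2), 1]"

lemma unit_null_perp_null_perp_vec:
  assumes "spacelike v" and e: "e^2 = 1"
  shows "unit_null_perp v (null_perp_vec e v)"
proof -
  define a b c where "a = v$1" and "b = v$2" and "c = v$3"
  define r d s where "r = a^2 + b^2" and "d = sqrt (ldot v v)" and "s = sqrt (1/2::real)"
  have "ldot v v > 0" using assms(1) unfolding spacelike_def .
  then have d2: "d^2 = r - c^2" and "r > 0"
    unfolding d_def r_def a_def b_def c_def ldot_def by (simp_all add: power2_eq_square)
      (smt (verit) zero_le_square)
  have x: "null_perp_vec e v = vector [s * ((a*c - e*b*d) / r), s * ((b*c + e*a*d) / r), s]"
    unfolding null_perp_vec_def a_def b_def c_def r_def d_def s_def by (simp add: vec_eq_iff forall_3)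
  have "(a*c - e*b*d)^2 + (b*c + e*a*d)^2 = r * (c^2 + e^2 * d^2)"
    unfolding r_def by algebra
  also have "\<dots> = r^2" using e d2 by (simp add: power2_eq_square)
  finally have quad: "(a*c - e*b*d)^2 + (b*c + e*a*d)^2 = r^2" .
  have lin: "a * (a*c - e*b*d) + b * (b*c + e*a*d) = c * r"
    unfolding r_def by algebra
  have "(s * ((a*c - e*b*d) / r))^2 + (s * ((b*c + e*a*d) / r))^2
      = ((a*c - e*b*d)^2 + (b*c + e*a*d)^2) * s^2 / r^2"
    using \<open>r > 0\<close> by (simp add: field_simps power2_eq_square)
  moreover have "a * (s * ((a*c - e*b*d) / r)) + b * (s * ((b*c + e*a*d) / r))
      = s * (a * (a*c - e*b*d) + b * (b*c + e*a*d)) / r"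
    using \<open>r > 0\<close> by (simp add: field_simps)
  moreover have "s^2 = 1/2" "s > 0" unfolding s_def by simp_all
  ultimately show ?thesis
    using quad lin \<open>r > 0\<close>
    unfolding unit_null_perp_iff_coords x by (simp add: a_def b_def c_def)
qed

lemma unit_null_perp_cases:
  assumes "spacelike v" and x: "unit_null_perp v x"
  shows "x = null_perp_vec 1 v \<or> x = null_perp_vec (-1) v"
proof -
  define a b c where "a = v$1" and "b = v$2" and "c = v$3"
  define r d s where "r = a^2 + b^2" and "d = sqrt (ldot v v)" and "s = sqrt (1/2::real)"
  have "ldot v v > 0" using assms(1) unfolding spacelike_def .
  then have d2: "d^2 = r - c^2" and "r > 0"
    unfolding d_def r_def a_def b_def c_def ldot_def by (simp_all add: power2_eq_square)
      (smt (verit) zero_le_square)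
  have npv: "null_perp_vec e v = vector [s * ((a*c - e*b*d) / r), s * ((b*c + e*a*d) / r), s]" for e
    unfolding null_perp_vec_def a_def b_def c_def r_def d_def s_def by (simp add: vec_eq_iff forall_3)
  have null: "x$1^2 + x$2^2 = x$3^2" and "x$3 > 0" and "x$1^2 + x$2^2 + x$3^2 = 1"
    and perp: "a * x$1 + b * x$2 = c * x$3"
    using x unfolding unit_null_perp_iff_coords a_def b_def c_def by auto
  then have "x$3^2 = s^2" by (simp add: s_def)
  moreover have "s > 0" by (simp add: s_def)
  ultimately have x3: "x$3 = s" using \<open>x$3 > 0\<close> by (simp add: power2_eq_iff_nonneg)
  define k where "k = a * x$2 - b * x$1"
  have "k^2 = r * (x$1^2 + x$2^2) - (a * x$1 + b * x$2)^2"
    unfolding k_def r_def by algebra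
  also have "\<dots> = (r - c^2) * s^2"
    using null perp x3 by (simp add: power_mult_distrib algebra_simps)
  also have "\<dots> = (s * d)^2"
    using d2 by (simp add: power_mult_distrib)
  finally have "k = 1 * (s * d) \<or> k = -1 * (s * d)" by (simp add: power2_eq_iff)
  moreover have "x = null_perp_vec e v" if k: "k = e * (s * d)" for e
  proof -
    have "r * x$1 = a*c * s - b*k" "r * x$2 = b*c * s + a*k"
      using perp x3 unfolding k_def r_def by algebra+
    then have "x$1 = s * ((a*c - e*b*d) / r)" "x$2 = s * ((b*c + e*a*d) / r)"
      using k \<open>r > 0\<close> by (simp_all add: field_simps)
    then show ?thesis using x3 unfolding npv by (simp add: vec_eq_iff forall_3)
  qed
  ultimately show ?thesis by blast
qed

lemma det3_null_perp_vec_pos: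
  assumes "spacelike v"
  shows "det3 (null_perp_vec 1 v) (null_perp_vec (-1) v) v > 0"
proof -
  define a b c where "a = v$1" and "b = v$2" and "c = v$3"
  define r d s where "r = a^2 + b^2" and "d = sqrt (ldot v v)" and "s = sqrt (1/2::real)"
  have "ldot v v > 0" using assms(1) unfolding spacelike_def .
  then have d2: "d^2 = r - c^2" and "r > 0" and "d > 0"
    unfolding d_def r_def a_def b_def c_def ldot_def by (simp_all add: power2_eq_square)
      (smt (verit) zero_le_square)
  have npv: "null_perp_vec e v = vector [s * ((a*c - e*b*d) / r), s * ((b*c + e*a*d) / r), s]" for e
    unfolding null_perp_vec_def a_def b_def c_def r_def d_def s_def by (simp add: vec_eq_iff forall_3)
  have "det3 (null_perp_vec 1 v) (null_perp_vec (-1) v) v = 2 * s^2 * d * (r - c^2) / r"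
    unfolding det3_eq npv using \<open>r > 0\<close>
    by (simp add: a_def[symmetric] b_def[symmetric] c_def[symmetric] field_simps)
      (simp add: r_def power2_eq_square algebra_simps)
  also have "\<dots> = d^3 / r"
    using d2 by (simp add: s_def power3_eq_cube power2_eq_square)
  finally show ?thesis using \<open>d > 0\<close> \<open>r > 0\<close> by simp
qed

lemma det3_same_12: "det3 u u w = 0"
  using det3_swap[of u u w] by simp

lemma
  assumes "spacelike v"
  shows vminus_eq: "vminus v = null_perp_vec 1 v"
    and vplus_eq: "vplus v = null_perp_vec (-1) v"
proof -
  let ?x1 = "null_perp_vec 1 v" and ?x2 = "null_perp_vec (-1) v"
  have unp: "unit_null_perp v x \<longleftrightarrow> x = ?x1 \<or> x = ?x2" for x
    using unit_null_perp_cases[OF assms] unit_null_perp_null_perp_vec[OF assms] by auto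
  have pos: "det3 ?x1 ?x2 v > 0" by (rule det3_null_perp_vec_pos[OF assms])
  moreover have "det3 ?x2 ?x1 v < 0" using pos det3_swap[of ?x2 ?x1 v] by simp
  moreover have "?x1 \<noteq> ?x2" using pos det3_same_12[of ?x1 v] by auto
  ultimately have "det3 x y v > 0 \<longleftrightarrow> x = ?x1 \<and> y = ?x2"
    if "unit_null_perp v x" "unit_null_perp v y" for x y
    using that unfolding unp by (elim disjE) (simp_all add: det3_same_12)
  then show "vminus v = ?x1" "vplus v = ?x2"
    unfolding vminus_def vplus_def using unp pos by (auto intro!: the_equality)
qed

lemma
  assumes "spacelike v"
  shows unit_null_perp_vminus: "unit_null_perp v (vminus v)"
    and unit_null_perp_vplus: "unit_null_perp v (vplus v)"
    and det3_vminus_vplus_pos: "det3 (vminus v) (vplus v) v > 0"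
  using unit_null_perp_null_perp_vec[OF assms] det3_null_perp_vec_pos[OF assms]
  unfolding vminus_eq[OF assms] vplus_eq[OF assms] by simp_all

lemma null_perp_vminus_vplus:
  assumes "spacelike v"
  shows "ldot (vminus v) (vminus v) = 0" "ldot (vplus v) (vplus v) = 0"
    "ldot (vminus v) v = 0" "ldot (vplus v) v = 0"
  using unit_null_perp_vminus[OF assms] unit_null_perp_vplus[OF assms]
  unfolding unit_null_perp_def null_vec_def by (simp_all add: ldot_commute)

lemma ldot_future_null_nonpos:
  assumes "null_vec x" "future_pointing x" "null_vec y" "future_pointing y"
  shows "ldot x y \<le> 0"
proof -
  have "x$1^2 + x$2^2 = x$3^2" "y$1^2 + y$2^2 = y$3^2" "x$3 * y$3 \<ge> 0"
    using assms unfolding null_vec_def future_pointing_def ldot_def by (simp_all add: power2_eq_square)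
  moreover have "(x$1*y$1 + x$2*y$2)^2 + (x$1*y$2 - x$2*y$1)^2 = (x$1^2 + x$2^2) * (y$1^2 + y$2^2)"
    by algebra
  ultimately have "(x$1*y$1 + x$2*y$2)^2 \<le> (x$3 * y$3)^2"
    by (simp add: power_mult_distrib) (smt (verit) zero_le_power2)
  then have "x$1*y$1 + x$2*y$2 \<le> x$3 * y$3"
    using \<open>x$3 * y$3 \<ge> 0\<close> by (rule power2_le_imp_le)
  then show ?thesis unfolding ldot_def by simp
qed

text \<open>The product is nonzero because its square is \<open>det3 (vminus v) (vplus v) v\<^sup>2 / ldot v v\<close>
  (a Gram determinant), and nonpositive since both vectors are future-pointing and null.\<close>
lemma ldot_vminus_vplus_neg:
  assumes "spacelike v"
  shows "ldot (vminus v) (vplus v) < 0"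
proof -
  note z = null_perp_vminus_vplus[OF assms]
  have "det3 (vminus v) (vplus v) v * det3 (vminus v) (vplus v) v = (ldot (vminus v) (vplus v))^2 * ldot v v"
    using det3_mult_det3[of "vminus v" "vplus v" v "vminus v" "vplus v" v] z
      ldot_commute[of v "vminus v"] ldot_commute[of v "vplus v"] ldot_commute[of "vplus v" "vminus v"]
    by (simp add: power2_eq_square)
  then have "ldot (vminus v) (vplus v) \<noteq> 0" using det3_vminus_vplus_pos[OF assms] by auto
  moreover have "ldot (vminus v) (vplus v) \<le> 0"
    using unit_null_perp_vminus[OF assms] unit_null_perp_vplus[OF assms]
    unfolding unit_null_perp_def by (blast intro: ldot_future_null_nonpos)
  ultimately show ?thesis by simp
qed

lemma Pset_det3_pos:
  assumes "w \<in> Pset z"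
  shows "det3 (vminus w) z w > 0"
proof -
  obtain c where "spacelike w" "c > 0" "vplus w = c *\<^sub>R z"
    using assms unfolding Pset_def by blast
  then show ?thesis
    using det3_vminus_vplus_pos[of w] by (simp add: det3_scaleR_2 zero_less_mult_iff)
qed

lemma Pset_ldot_vminus_nonpos:
  assumes "w \<in> Pset z" "null_vec z" "future_pointing z"
  shows "ldot (vminus w) z \<le> 0"
  using assms unit_null_perp_vminus[of w] ldot_future_null_nonpos
  unfolding Pset_def unit_null_perp_def by blast

lemma Pset_vplus_ldot_pos:
  assumes "spacelike v" "w \<in> Pset (vplus v)"
  shows "ldot w v > 0"
proof -
  let ?n = "vminus v" and ?m = "vplus v" and ?y = "vminus w"
  note z = null_perp_vminus_vplus[OF assms(1)]
  have "ldot w ?m = 0" using assms(2) unfolding Pset_def by (simp add: ldot_commute)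
  then have "det3 ?y ?m w * det3 ?n ?m v = ldot ?y ?m * ldot ?m ?n * ldot w v"
    using det3_mult_det3[of ?y ?m w ?n ?m v] z by simp
  moreover have "det3 ?y ?m w * det3 ?n ?m v > 0"
    using Pset_det3_pos[OF assms(2)] det3_vminus_vplus_pos[OF assms(1)] by simp
  moreover have "ldot ?y ?m * ldot ?m ?n \<ge> 0"
    using Pset_ldot_vminus_nonpos[OF assms(2)] unit_null_perp_vplus[OF assms(1)]
      ldot_vminus_vplus_neg[OF assms(1)] ldot_commute[of ?m ?n]
    by (simp add: unit_null_perp_def mult_nonpos_nonpos)
  ultimately show ?thesis by (metis mult_nonneg_nonpos not_less)
qed

lemma Pset_vminus_ldot_neg:
  assumes "spacelike v" "w \<in> Pset (vminus v)"
  shows "ldot w v < 0"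
proof -
  let ?n = "vminus v" and ?m = "vplus v" and ?y = "vminus w"
  note z = null_perp_vminus_vplus[OF assms(1)]
  have "ldot w ?n = 0" using assms(2) unfolding Pset_def by (simp add: ldot_commute)
  then have "det3 ?y ?n w * det3 ?n ?m v = - (ldot ?y ?n * ldot ?n ?m * ldot w v)"
    using det3_mult_det3[of ?y ?n w ?n ?m v] z by simp
  moreover have "det3 ?y ?n w * det3 ?n ?m v > 0"
    using Pset_det3_pos[OF assms(2)] det3_vminus_vplus_pos[OF assms(1)] by simp
  moreover have "ldot ?y ?n * ldot ?n ?m \<ge> 0"
    using Pset_ldot_vminus_nonpos[OF assms(2)] unit_null_perp_vminus[OF assms(1)]
      ldot_vminus_vplus_neg[OF assms(1)]
    by (simp add: unit_null_perp_def mult_nonpos_nonpos)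
  ultimately show ?thesis by (smt (verit) mult_nonneg_nonneg)
qed

text \<open>\<open>z\<close>, \<open>vminus v\<close> and \<open>vplus v\<close> all lie in the plane \<open>v\<^sup>\<perp>\<close>, so their determinant
  vanishes; its Gram expansion then ties the sign of the product to that of \<open>ldot z z\<close>.\<close>
lemma stem_ldot_vminus_vplus_nonneg:
  assumes "spacelike v" "ldot v z = 0" "ldot z z \<le> 0"
  shows "ldot z (vminus v) * ldot z (vplus v) \<ge> 0"
proof -
  let ?n = "vminus v" and ?m = "vplus v"
  note z = null_perp_vminus_vplus[OF assms(1)]
  note commute = ldot_commute[of ?n z] ldot_commute[of ?m z] ldot_commute[of ?m ?n] ldot_commute[of z v]
  have "det3 z ?n ?m * det3 ?n ?m v = 0"
    using det3_mult_det3[of z ?n ?m ?n ?m v] z assms(2) commute by simp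
  then have "det3 z ?n ?m = 0" using det3_vminus_vplus_pos[OF assms(1)] by simp
  moreover have "det3 z ?n ?m * det3 z ?n ?m
      = ldot z z * (ldot ?n ?m)^2 - 2 * (ldot z ?n * ldot z ?m) * ldot ?n ?m"
    using det3_mult_det3[of z ?n ?m z ?n ?m] z commute by (simp add: power2_eq_square algebra_simps)
  moreover have "ldot z z * (ldot ?n ?m)^2 \<le> 0"
    using assms(3) by (simp add: mult_nonpos_nonneg)
  ultimately have "(ldot z ?n * ldot z ?m) * ldot ?n ?m \<le> 0" by simp
  then show ?thesis
    using ldot_vminus_vplus_neg[OF assms(1)] by (metis mult_neg_neg not_less order_less_imp_le)
qed

definition crooked_wedges :: "real^3 \<Rightarrow> (real^3) set" where
  "crooked_wedges v = {x. (ldot x v \<ge> 0 \<and> ldot x (vplus v) < 0) \<or> (ldot x v \<le> 0 \<and> ldot x (vminus v) > 0)}"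

lemma crooked_plane_subset_wedges:
  assumes "spacelike v" "a > 0" "b > 0"
  shows "crooked_plane v (a *\<^sub>R vminus v - b *\<^sub>R vplus v) \<subseteq> crooked_wedges v"
proof
  let ?n = "vminus v" and ?m = "vplus v"
  let ?p = "a *\<^sub>R ?n - b *\<^sub>R ?m"
  note z = null_perp_vminus_vplus[OF assms(1)]
  have nm: "ldot ?n ?m < 0" "ldot ?m ?n < 0"
    using ldot_vminus_vplus_neg[OF assms(1)] ldot_commute[of ?m ?n] by simp_all
  have p: "ldot ?p v = 0" "ldot ?p ?m < 0" "ldot ?p ?n > 0"
    using z nm assms(2,3) by (simp_all add: ldot_diff_left ldot_scaleR_left mult_pos_neg)
  fix x assume "x \<in> crooked_plane v ?p"
  then consider (plus_wing) w where "w \<in> Pset ?m" "x = ?p + w"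
    | (minus_wing) w where "w \<in> Pset ?n" "x = ?p + w"
    | (stem) w where "ldot v w = 0" "ldot w w \<le> 0" "x = ?p + w"
    unfolding crooked_plane_def by blast
  then show "x \<in> crooked_wedges v"
  proof cases
    case (plus_wing w)
    have "ldot w v > 0" "ldot w ?m = 0"
      using Pset_vplus_ldot_pos[OF assms(1) plus_wing(1)] plus_wing(1) ldot_commute[of ?m w]
      unfolding Pset_def by auto
    then show ?thesis using plus_wing p unfolding crooked_wedges_def by (simp add: ldot_add_left)
  next
    case (minus_wing w)
    have "ldot w v < 0" "ldot w ?n = 0"
      using Pset_vminus_ldot_neg[OF assms(1) minus_wing(1)] minus_wing(1) ldot_commute[of ?n w]
      unfolding Pset_def by auto
    then show ?thesis using minus_wing p unfolding crooked_wedges_def by (simp add: ldot_add_left)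
  next
    case (stem w)
    have "ldot w v = 0" using stem(1) ldot_commute[of v w] by simp
    have "ldot w ?n * ldot w ?m \<ge> 0"
      using stem_ldot_vminus_vplus_nonneg[OF assms(1) stem(1,2)] .
    then have "ldot w ?m \<le> 0 \<or> ldot w ?n \<ge> 0" by (metis mult_neg_pos not_le)
    then show ?thesis
      using stem(3) p \<open>ldot w v = 0\<close> unfolding crooked_wedges_def by (auto simp: ldot_add_left)
  qed
qed

lemma ldot_lcross_expansion:
  assumes "ldot z u = 0"
  shows "ldot (lcross u v) (lcross u v) * ldot x z
    = ldot x (lcross u v) * ldot z (lcross u v) + (ldot u v * ldot x u - ldot u u * ldot x v) * ldot z v"
  unfolding ldot_lcross_self unfolding ldot_lcross det3_mult_det3
  using assms by (simp add: ldot_commute power2_eq_square algebra_simps)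

lemma sign_of_square_roots:
  fixes P om om' mu nu :: real
  assumes "P \<ge> 0" "om^2 = P * mu^2" "om'^2 = P * nu^2" "mu \<le> 0" "nu \<le> 0" "om' * mu - nu * om > 0"
  shows "om = - (sqrt P * mu)" "om' = sqrt P * nu"
proof -
  have "om^2 = (sqrt P * mu)^2" "om'^2 = (sqrt P * nu)^2"
    using assms(1-3) by (simp_all add: power_mult_distrib)
  then have "om = sqrt P * mu \<or> om = - (sqrt P * mu)" "om' = sqrt P * nu \<or> om' = - (sqrt P * nu)"
    by (simp_all add: power2_eq_iff)
  moreover have "sqrt P * (mu * nu) \<ge> 0" using assms(1,4,5) by (simp add: mult_nonpos_nonpos)
  ultimately show "om = - (sqrt P * mu)" "om' = sqrt P * nu"
    using assms(6) by (auto simp: algebra_simps)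
qed

text \<open>Each of \<open>vplus u\<close>, \<open>vminus u\<close> is null and orthogonal to \<open>u\<close>, which fixes its
  \<open>lcross u v\<close>-component up to sign; the signs come from the orientations
  \<open>det3 (vminus u) (vplus u) u > 0\<close> and \<open>det3 (lcross u v) u v = ldot (lcross u v) (lcross u v) > 0\<close>.\<close>
lemma ldot_lcross_vplus_vminus:
  assumes "spacelike u" "spacelike (lcross u v)" "ldot v (vplus u) \<le> 0" "ldot v (vminus u) \<le> 0"
  shows "ldot (vplus u) (lcross u v) = - (sqrt (ldot u u) * ldot (vplus u) v)"
    and "ldot (vminus u) (lcross u v) = sqrt (ldot u u) * ldot (vminus u) v"
proof -
  let ?n = "vminus u" and ?m = "vplus u" and ?w = "lcross u v"
  note z = null_perp_vminus_vplus[OF assms(1)]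
  have sq: "(ldot y ?w)^2 = ldot u u * (ldot y v)^2" if "ldot y y = 0" "ldot y u = 0" for y
    using ldot_lcross_expansion[of y u v y] that by (simp add: power2_eq_square)
  have "det3 ?n ?m u * det3 ?w u v = ldot u u * (ldot ?n ?w * ldot ?m v - ldot ?n v * ldot ?m ?w)"
    using det3_mult_det3[of ?n ?m u ?w u v] z ldot_lcross_left[of u v]
    by (simp add: ldot_commute algebra_simps)
  moreover have "det3 ?n ?m u * det3 ?w u v > 0"
    using det3_vminus_vplus_pos[OF assms(1)] assms(2)
    unfolding ldot_lcross[symmetric] spacelike_def by simp
  ultimately have "ldot ?n ?w * ldot ?m v - ldot ?n v * ldot ?m ?w > 0"
    using assms(1) unfolding spacelike_def by (simp add: zero_less_mult_iff)
  then show "ldot ?m ?w = - (sqrt (ldot u u) * ldot ?m v)" "ldot ?n ?w = sqrt (ldot u u) * ldot ?n v"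
    using sign_of_square_roots[OF _ sq sq] z assms ldot_commute[of v]
    unfolding spacelike_def by auto
qed

lemma crooked_wedges_coordinates:
  assumes "spacelike u" "spacelike (lcross u v)" "ldot v (vplus u) \<le> 0" "ldot v (vminus u) \<le> 0"
    and "x \<in> crooked_wedges u"
  shows "(ldot x u \<ge> 0 \<and>
          ldot u u * ldot x v - ldot u v * ldot x u + sqrt (ldot u u) * ldot x (lcross u v) < 0) \<or>
         (ldot x u \<le> 0 \<and>
          ldot u u * ldot x v - ldot u v * ldot x u - sqrt (ldot u u) * ldot x (lcross u v) > 0)"
proof -
  let ?n = "vminus u" and ?m = "vplus u" and ?w = "lcross u v"
  let ?E = "\<lambda>s. ldot u u * ldot x v - ldot u v * ldot x u + s * sqrt (ldot u u) * ldot x ?w"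
  note z = null_perp_vminus_vplus[OF assms(1)]
  note signs = ldot_lcross_vplus_vminus[OF assms(1-4)]
  have W: "ldot ?w ?w > 0" using assms(2) unfolding spacelike_def .
  have "ldot ?w ?w * ldot x ?m = - (ldot ?m v * ?E 1)"
    using ldot_lcross_expansion[of ?m u v x] z signs by (simp add: algebra_simps)
  then have m: "ldot x ?m < 0 \<Longrightarrow> ?E 1 < 0"
    using W assms(3) ldot_commute[of v ?m] by (smt (verit) mult_nonpos_nonneg mult_pos_neg)
  have "ldot ?w ?w * ldot x ?n = - (ldot ?n v * ?E (-1))"
    using ldot_lcross_expansion[of ?n u v x] z signs by (simp add: algebra_simps)
  then have n: "ldot x ?n > 0 \<Longrightarrow> ?E (-1) > 0"
    using W assms(4) ldot_commute[of v ?n] by (smt (verit) mult_nonpos_nonpos mult_pos_pos)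
  show ?thesis using assms(5) m n unfolding crooked_wedges_def by auto
qed

lemma wedge_inequalities_inconsistent:
  fixes P Q G y1 y2 y3 :: real
  assumes "P > 0" "Q > 0" "G < 0" "G^2 > P * Q"
    and "(y1 \<ge> 0 \<and> P*y2 - G*y1 + sqrt P * y3 < 0) \<or> (y1 \<le> 0 \<and> P*y2 - G*y1 - sqrt P * y3 > 0)"
    and "(y2 \<ge> 0 \<and> Q*y1 - G*y2 - sqrt Q * y3 < 0) \<or> (y2 \<le> 0 \<and> Q*y1 - G*y2 + sqrt Q * y3 > 0)"
  shows False
proof -
  define a c where "a = sqrt P" and "c = sqrt Q"
  have "a > 0" "c > 0" and P: "P = a * a" and Q: "Q = c * c"
    using assms(1,2) unfolding a_def c_def by simp_all
  have "(a * c)^2 < (- G)^2" using assms(4) P Q by (simp add: power2_eq_square mult.assoc mult.left_commute)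
  then have "a * c + G < 0" using assms(3) power2_less_imp_less[of "a * c" "- G"] by simp
  then have "a * c - G > 0" using assms(3) \<open>a > 0\<close> \<open>c > 0\<close> by (smt (verit) mult_pos_pos)
  \<comment> \<open>In each case, combining the two inequalities with weights \<open>c\<close> and \<open>\<plusminus>a\<close> eliminates \<open>y3\<close>.\<close>
  have same: "c * (a*a*y2 - G*y1 + s*a*y3) + a * (c*c*y1 - G*y2 - s*c*y3) = (a*c - G) * (a*y2 + c*y1)"
    and opposite: "c * (a*a*y2 - G*y1 + s*a*y3) - a * (c*c*y1 - G*y2 + s*c*y3) = (a*c + G) * (a*y2 - c*y1)"
    for s by algebra+
  have "\<not> (y1 \<ge> 0 \<and> a*a*y2 - G*y1 + a*y3 < 0 \<and> y2 \<ge> 0 \<and> c*c*y1 - G*y2 - c*y3 < 0)"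
    using same[of 1] mult_pos_neg[OF \<open>c > 0\<close>, of "a*a*y2 - G*y1 + a*y3"]
      mult_pos_neg[OF \<open>a > 0\<close>, of "c*c*y1 - G*y2 - c*y3"]
      mult_nonneg_nonneg[of "a*c - G" "a*y2 + c*y1"] mult_nonneg_nonneg[of a y2] mult_nonneg_nonneg[of c y1]
      \<open>a > 0\<close> \<open>c > 0\<close> \<open>a * c - G > 0\<close> by (smt (verit))
  moreover have "\<not> (y1 \<ge> 0 \<and> a*a*y2 - G*y1 + a*y3 < 0 \<and> y2 \<le> 0 \<and> c*c*y1 - G*y2 + c*y3 > 0)"
    using opposite[of 1] mult_pos_neg[OF \<open>c > 0\<close>, of "a*a*y2 - G*y1 + a*y3"]
      mult_pos_pos[OF \<open>a > 0\<close>, of "c*c*y1 - G*y2 + c*y3"]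
      mult_nonpos_nonpos[of "a*c + G" "a*y2 - c*y1"] mult_nonneg_nonpos[of a y2] mult_nonneg_nonneg[of c y1]
      \<open>a > 0\<close> \<open>c > 0\<close> \<open>a * c + G < 0\<close> by (smt (verit))
  moreover have "\<not> (y1 \<le> 0 \<and> a*a*y2 - G*y1 - a*y3 > 0 \<and> y2 \<ge> 0 \<and> c*c*y1 - G*y2 - c*y3 < 0)"
    using opposite[of "-1", simplified] mult_pos_pos[OF \<open>c > 0\<close>, of "a*a*y2 - G*y1 - a*y3"]
      mult_pos_neg[OF \<open>a > 0\<close>, of "c*c*y1 - G*y2 - c*y3"]
      mult_nonpos_nonneg[of "a*c + G" "a*y2 - c*y1"] mult_nonneg_nonneg[of a y2] mult_nonneg_nonpos[of c y1]
      \<open>a > 0\<close> \<open>c > 0\<close> \<open>a * c + G < 0\<close> by (smt (verit))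
  moreover have "\<not> (y1 \<le> 0 \<and> a*a*y2 - G*y1 - a*y3 > 0 \<and> y2 \<le> 0 \<and> c*c*y1 - G*y2 + c*y3 > 0)"
    using same[of "-1", simplified] mult_pos_pos[OF \<open>c > 0\<close>, of "a*a*y2 - G*y1 - a*y3"]
      mult_pos_pos[OF \<open>a > 0\<close>, of "c*c*y1 - G*y2 + c*y3"]
      mult_nonneg_nonpos[of "a*c - G" "a*y2 + c*y1"] mult_nonneg_nonpos[of a y2] mult_nonneg_nonpos[of c y1]
      \<open>a > 0\<close> \<open>c > 0\<close> \<open>a * c - G > 0\<close> by (smt (verit))
  ultimately show False
    using assms(5,6) unfolding a_def[symmetric] c_def[symmetric] unfolding P Q by blast
qed

lemma crooked_wedges_disjoint:
  assumes co: "consistently_oriented v1 v2" and up: "ultraparallel v1 v2"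
  shows "crooked_wedges v1 \<inter> crooked_wedges v2 = {}"
proof -
  have sp: "spacelike v1" "spacelike v2" and "ldot v1 v2 < 0"
    and "ldot v2 (vplus v1) \<le> 0" "ldot v2 (vminus v1) \<le> 0"
    and "ldot v1 (vplus v2) \<le> 0" "ldot v1 (vminus v2) \<le> 0"
    using co unfolding consistently_oriented_def by auto
  have w: "spacelike (lcross v1 v2)" using up unfolding ultraparallel_def by simp
  then have w': "spacelike (lcross v2 v1)"
    unfolding lcross_commute[of v2] spacelike_def ldot_def by simp
  have "(ldot v1 v2)^2 > ldot v1 v1 * ldot v2 v2"
    using w unfolding spacelike_def ldot_lcross_self by simp
  moreover have False if "x \<in> crooked_wedges v1" "x \<in> crooked_wedges v2" for x
  proof -
    define y3 where "y3 = ldot x (lcross v1 v2)"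
    have "ldot x (lcross v2 v1) = - y3"
      unfolding y3_def lcross_commute[of v2] ldot_uminus_right ..
    then have "(ldot x v2 \<ge> 0 \<and>
          ldot v2 v2 * ldot x v1 - ldot v1 v2 * ldot x v2 - sqrt (ldot v2 v2) * y3 < 0) \<or>
         (ldot x v2 \<le> 0 \<and>
          ldot v2 v2 * ldot x v1 - ldot v1 v2 * ldot x v2 + sqrt (ldot v2 v2) * y3 > 0)"
      using crooked_wedges_coordinates[OF sp(2) w' \<open>ldot v1 (vplus v2) \<le> 0\<close>
          \<open>ldot v1 (vminus v2) \<le> 0\<close> that(2)]
      by (simp add: ldot_commute[of v2 v1])
    then show False
      using wedge_inequalities_inconsistent[OF _ _ \<open>ldot v1 v2 < 0\<close> \<open>(ldot v1 v2)^2 > _\<close>]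
        crooked_wedges_coordinates[OF sp(1) w \<open>ldot v2 (vplus v1) \<le> 0\<close>
          \<open>ldot v2 (vminus v1) \<le> 0\<close> that(1)] sp
      unfolding y3_def spacelike_def by blast
  qed
  ultimately show ?thesis by blast
qed

theorem corollary4p4:
  fixes v1 v2 :: "real^3" and a1 b1 a2 b2 :: real
  assumes "spacelike v1" and "spacelike v2"
    and "consistently_oriented v1 v2"
    and "ultraparallel v1 v2"
    and "a1 > 0" and "b1 > 0" and "a2 > 0" and "b2 > 0"
  shows "crooked_plane v1 (a1 *\<^sub>R vminus v1 - b1 *\<^sub>R vplus v1) \<inter>
         crooked_plane v2 (a2 *\<^sub>R vminus v2 - b2 *\<^sub>R vplus v2) = {}"
  using crooked_plane_subset_wedges[OF assms(1,5,6)] crooked_plane_subset_wedges[OF assms(2,7,8)]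
    crooked_wedges_disjoint[OF assms(3,4)] by blast

end
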